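(* Let $(M,d)$ be a bounded metric space with metric normal structure such that $\mathcal A(M)$ is compact. Let $\mathcal F$ be a family of interlaced orbit-nonexpansive self-mappings of $M$. Then there exists a point $x\in M$ with $Tx=x$ for all $T\in\mathcal F$. Moreover, the common fixed point set $\mathrm{Fix}(\mathcal F)=\{x\in M: Tx=x\ \forall T\in\mathcal F\}$ is a one-local retract of $M$.
   Context: For a metric space $(M,d)$, a mapping $T:M\to M$ and $x\in M$, the orbit of $x$ is $o_T(x)=\{x\}\cup\{T^nx:n\in\mathbb N\}$. For $x\in M$ and bounded $A\subseteq M$, $D(x,A)=\sup\{d(x,a):a\in A\}$ and $\delta(A)=\sup\{d(x,y):x,y\in A\}$. A family $\mathcal F$ of self-mappings of a bounded metric space $M$ is a family of interlaced orbit-nonexpansive mappings if $d(Tx,Sy)\le\sup\{D(x,o_R(y)):R\in\mathcal F\}$ for all $T,S\in\mathcal F$ and $x,y\in M$. A subset of $M$ is admissible if it is an intersection of closed balls of $M$; $\mathcal A(M)$ denotes the family of admissible sets. $\mathcal A(M)$ is compact if every subfamily of $\mathcal A(M)$ all of whose finite intersections are nonempty has nonempty intersection. $(M,d)$ has metric normal structure if for every admissible set $A$ with more than one point there exists $z_A\in A$ with $D(z_A,A)<\delta(A)$. A subset $E\subseteq M$ is a one-local retract of $M$ if for every family of closed balls with centers in $E$ having nonempty intersection, that intersection meets $E$. *)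

theory Defs
  imports "HOL-Analysis.Analysis"
begin

definition bounded_metric :: "'a set \<Rightarrow> ('a \<Rightarrow> 'a \<Rightarrow> real) \<Rightarrow> bool" where
  "bounded_metric M d \<longleftrightarrow> (\<exists>B. \<forall>x\<in>M. \<forall>y\<in>M. d x y \<le> B)"

definition orbit :: "('a \<Rightarrow> 'a) \<Rightarrow> 'a \<Rightarrow> 'a set" where
  "orbit T x = insert x {(T ^^ n) x | n. n \<ge> 1}"

definition Dpt :: "('a \<Rightarrow> 'a \<Rightarrow> real) \<Rightarrow> 'a \<Rightarrow> 'a set \<Rightarrow> real" where
  "Dpt d x A = Sup {d x a | a. a \<in> A}"

definition diam_d :: "('a \<Rightarrow> 'a \<Rightarrow> real) \<Rightarrow> 'a set \<Rightarrow> real" where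
  "diam_d d A = Sup {d x y | x y. x \<in> A \<and> y \<in> A}"

definition self_maps :: "'a set \<Rightarrow> ('a \<Rightarrow> 'a) set \<Rightarrow> bool" where
  "self_maps M F \<longleftrightarrow> (\<forall>T\<in>F. \<forall>x\<in>M. T x \<in> M)"

definition interlaced_orbit_nonexpansive ::
  "'a set \<Rightarrow> ('a \<Rightarrow> 'a \<Rightarrow> real) \<Rightarrow> ('a \<Rightarrow> 'a) set \<Rightarrow> bool" where
  "interlaced_orbit_nonexpansive M d F \<longleftrightarrow> self_maps M F \<and>
     (\<forall>T\<in>F. \<forall>S\<in>F. \<forall>x\<in>M. \<forall>y\<in>M.
        d (T x) (S y) \<le> Sup {Dpt d x (orbit R y) | R. R \<in> F})"

definition closed_balls :: "'a set \<Rightarrow> ('a \<Rightarrow> 'a \<Rightarrow> real) \<Rightarrow> 'a set set" where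
  "closed_balls M d = {Metric_space.mcball M d c r | c r. c \<in> M \<and> r \<ge> 0}"

text \<open>admissible: intersection of closed balls of M (the empty intersection is M)\<close>
definition admissible :: "'a set \<Rightarrow> ('a \<Rightarrow> 'a \<Rightarrow> real) \<Rightarrow> 'a set \<Rightarrow> bool" where
  "admissible M d A \<longleftrightarrow> (\<exists>\<B>. \<B> \<subseteq> closed_balls M d \<and> A = M \<inter> \<Inter>\<B>)"

definition admissible_compact :: "'a set \<Rightarrow> ('a \<Rightarrow> 'a \<Rightarrow> real) \<Rightarrow> bool" where
  "admissible_compact M d \<longleftrightarrow>
     (\<forall>\<C>. \<C> \<subseteq> Collect (admissible M d) \<longrightarrow>
        (\<forall>\<G>. \<G> \<subseteq> \<C> \<and> finite \<G> \<and> \<G> \<noteq> {} \<longrightarrow> \<Inter>\<G> \<noteq> {}) \<longrightarrow>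
        M \<inter> \<Inter>\<C> \<noteq> {})"

definition metric_normal_structure :: "'a set \<Rightarrow> ('a \<Rightarrow> 'a \<Rightarrow> real) \<Rightarrow> bool" where
  "metric_normal_structure M d \<longleftrightarrow>
     (\<forall>A. admissible M d A \<and> (\<exists>x\<in>A. \<exists>y\<in>A. x \<noteq> y) \<longrightarrow>
        (\<exists>z\<in>A. Dpt d z A < diam_d d A))"

definition one_local_retract :: "'a set \<Rightarrow> ('a \<Rightarrow> 'a \<Rightarrow> real) \<Rightarrow> 'a set \<Rightarrow> bool" where
  "one_local_retract M d E \<longleftrightarrow> E \<subseteq> M \<and>
     (\<forall>P :: ('a \<times> real) set. (\<forall>(c,r)\<in>P. c \<in> E \<and> r \<ge> 0) \<longrightarrow>
        M \<inter> (\<Inter>(c,r)\<in>P. Metric_space.mcball M d c r) \<noteq> {} \<longrightarrow>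
        M \<inter> (\<Inter>(c,r)\<in>P. Metric_space.mcball M d c r) \<inter> E \<noteq> {})"

definition common_fixed_points :: "'a set \<Rightarrow> ('a \<Rightarrow> 'a) set \<Rightarrow> 'a set" where
  "common_fixed_points M F = {x\<in>M. \<forall>T\<in>F. T x = x}"

end

theory Submission
  imports Defs
begin

text \<open>By Zorn's lemma and compactness of the admissible sets, every nonempty admissible set
  invariant under the family contains a minimal one, K. If K had two points, normal structure
  would give a centre z with K \<subseteq> B(z,r), r < \<delta>(K). The interlacing condition makes the set
  of all such centres invariant, and by minimality it is K itself; hence \<delta>(K) \<le> r, a
  contradiction. So K is a common fixed point. Closed balls centred at common fixed points are
  invariant, since their orbits are trivial; applied to an intersection of such balls this gives
  the one-local retract property.\<close>

definition invariant_under :: "('a \<Rightarrow> 'a) set \<Rightarrow> 'a set \<Rightarrow> bool" where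
  "invariant_under F K \<longleftrightarrow> (\<forall>T\<in>F. \<forall>x\<in>K. T x \<in> K)"

definition minimal_invariant_admissible ::
  "'a set \<Rightarrow> ('a \<Rightarrow> 'a \<Rightarrow> real) \<Rightarrow> ('a \<Rightarrow> 'a) set \<Rightarrow> 'a set \<Rightarrow> bool" where
  "minimal_invariant_admissible M d F K \<longleftrightarrow>
     admissible M d K \<and> K \<noteq> {} \<and> invariant_under F K \<and>
     (\<forall>K'. admissible M d K' \<and> K' \<noteq> {} \<and> invariant_under F K' \<and> K' \<subseteq> K \<longrightarrow> K' = K)"

lemma invariant_under_Inter:
  "(\<And>A. A \<in> \<A> \<Longrightarrow> invariant_under F A) \<Longrightarrow> invariant_under F (\<Inter>\<A>)"
  unfolding invariant_under_def by blast

lemma invariant_under_carrier: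
  "interlaced_orbit_nonexpansive M d F \<Longrightarrow> invariant_under F M"
  unfolding interlaced_orbit_nonexpansive_def self_maps_def invariant_under_def by blast

lemma admissible_subset: "admissible M d A \<Longrightarrow> A \<subseteq> M"
  unfolding admissible_def by auto

lemma admissible_carrier: "admissible M d M"
  unfolding admissible_def by (intro exI[of _ "{}"]) auto

lemma admissible_Inter:
  assumes "\<C> \<subseteq> Collect (admissible M d)"
  shows "admissible M d (M \<inter> \<Inter>\<C>)"
proof -
  define \<B> where "\<B> = {b\<in>closed_balls M d. \<exists>A\<in>\<C>. A \<subseteq> b}"
  have "x \<in> A" if x: "x \<in> M \<inter> \<Inter>\<B>" and A: "A \<in> \<C>" for x A
  proof -
    from A assms obtain \<B>' where \<B>': "\<B>' \<subseteq> closed_balls M d" "A = M \<inter> \<Inter>\<B>'"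
      unfolding admissible_def by blast
    moreover have "A \<subseteq> b" if "b \<in> \<B>'" for b using that unfolding \<B>'(2) by blast
    ultimately have "\<B>' \<subseteq> \<B>" using A unfolding \<B>_def by blast
    then show ?thesis using x \<B>'(2) by blast
  qed
  moreover have "M \<inter> \<Inter>\<C> \<subseteq> \<Inter>\<B>" unfolding \<B>_def by blast
  ultimately have "M \<inter> \<Inter>\<C> = M \<inter> \<Inter>\<B>" by blast
  moreover have "\<B> \<subseteq> closed_balls M d" unfolding \<B>_def by blast
  ultimately show ?thesis unfolding admissible_def by (intro exI[of _ \<B>]) simp
qed

lemma admissible_Int:
  assumes "admissible M d A" "admissible M d B"
  shows "admissible M d (A \<inter> B)"
proof -
  have "admissible M d (M \<inter> \<Inter>{A, B})" using assms by (intro admissible_Inter) auto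
  moreover have "M \<inter> \<Inter>{A, B} = A \<inter> B" using admissible_subset[OF assms(1)] by blast
  ultimately show ?thesis by simp
qed

lemma invariant_under_orbit_subset:
  assumes "invariant_under F K" "R \<in> F" "y \<in> K"
  shows "orbit R y \<subseteq> K"
proof -
  have "(R ^^ n) y \<in> K" for n
    by (induction n) (use assms in \<open>auto simp: invariant_under_def\<close>)
  then show ?thesis unfolding orbit_def using assms(3) by blast
qed

lemma orbit_fixed_point: "R c = c \<Longrightarrow> orbit R c = {c}"
proof -
  assume "R c = c"
  then have "(R ^^ n) c = c" for n by (induction n) auto
  then show ?thesis unfolding orbit_def by auto
qed

lemma Dpt_le:
  assumes "A \<noteq> {}" "\<And>a. a \<in> A \<Longrightarrow> d x a \<le> r"
  shows "Dpt d x A \<le> r"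
  unfolding Dpt_def using assms by (intro cSup_least) auto

lemma diam_d_le:
  assumes "A \<noteq> {}" "\<And>x y. x \<in> A \<Longrightarrow> y \<in> A \<Longrightarrow> d x y \<le> r"
  shows "diam_d d A \<le> r"
  unfolding diam_d_def using assms by (intro cSup_least) blast+

lemma dist_le_Dpt:
  assumes "bounded_metric M d" "x \<in> M" "A \<subseteq> M" "a \<in> A"
  shows "d x a \<le> Dpt d x A"
proof -
  obtain B where "\<And>x y. x \<in> M \<Longrightarrow> y \<in> M \<Longrightarrow> d x y \<le> B"
    using assms(1) unfolding bounded_metric_def by blast
  then have "bdd_above {d x a | a. a \<in> A}"
    using assms(2,3) by (auto simp: bdd_above_def)
  then show ?thesis unfolding Dpt_def using assms(4) by (auto intro: cSup_upper)
qed

lemma interlaced_dist_le: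
  assumes "interlaced_orbit_nonexpansive M d F" "F \<noteq> {}"
    and "invariant_under F K" "K \<subseteq> M" "x \<in> K" "y \<in> K" "\<And>a. a \<in> K \<Longrightarrow> d x a \<le> r"
    and "T \<in> F" "S \<in> F"
  shows "d (T x) (S y) \<le> r"
proof -
  have "Dpt d x (orbit R y) \<le> r" if "R \<in> F" for R
    using invariant_under_orbit_subset[OF assms(3) that assms(6)] assms(7)
    by (intro Dpt_le) (auto simp: orbit_def)
  then have "Sup {Dpt d x (orbit R y) | R. R \<in> F} \<le> r"
    using assms(2) by (intro cSup_least) auto
  moreover have "d (T x) (S y) \<le> Sup {Dpt d x (orbit R y) | R. R \<in> F}"
    using assms unfolding interlaced_orbit_nonexpansive_def by blast
  ultimately show ?thesis by linarith
qed

lemma chain_finite_Inter_nonempty: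
  assumes "subset.chain UNIV \<C>" "{} \<notin> \<C>" "\<G> \<subseteq> \<C>" "finite \<G>" "\<G> \<noteq> {}"
  shows "\<Inter>\<G> \<noteq> {}"
proof -
  have "subset.chain UNIV \<G>" using assms(1,3) by (auto simp: subset.chain_def)
  with assms(4,5) have "\<Inter>\<G> \<in> \<G>" by (rule Inter_in_chain)
  then show ?thesis using assms(2,3) by (metis subsetD)
qed

lemma exists_minimal_invariant_admissible:
  assumes "admissible_compact M d"
    and "admissible M d A" "A \<noteq> {}" "invariant_under F A"
  shows "\<exists>K\<subseteq>A. minimal_invariant_admissible M d F K"
proof -
  define \<K> where "\<K> = {K. admissible M d K \<and> K \<noteq> {} \<and> K \<subseteq> A \<and> invariant_under F K}"
  have "\<exists>K\<in>\<K>. \<forall>K'\<in>\<K>. K' \<subseteq> K \<longrightarrow> K' = K"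
  proof (rule predicate_Zorn[where P="\<lambda>K K'. K' \<subseteq> K"])
    show "partial_order_on \<K> (relation_of (\<lambda>K K'. K' \<subseteq> K) \<K>)"
      by (rule partial_order_on_relation_ofI) auto
  next
    fix \<C> assume C: "\<C> \<in> Chains (relation_of (\<lambda>K K'. K' \<subseteq> K) \<K>)"
    then have CK: "\<C> \<subseteq> \<K>" by (rule Chains_relation_of)
    have chain: "subset.chain UNIV \<C>"
      using C unfolding Chains_def relation_of_def subset.chain_def by auto
    show "\<exists>K\<in>\<K>. \<forall>K'\<in>\<C>. K \<subseteq> K'"
    proof (cases "\<C> = {}")
      case True
      then show ?thesis using assms(2-4) unfolding \<K>_def by blast
    next
      case False
      have adm: "\<C> \<subseteq> Collect (admissible M d)" and "{} \<notin> \<C>"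
        using CK unfolding \<K>_def by blast+
      then have "M \<inter> \<Inter>\<C> \<noteq> {}"
        using assms(1) chain_finite_Inter_nonempty[OF chain] unfolding admissible_compact_def by blast
      moreover have "M \<inter> \<Inter>\<C> = \<Inter>\<C>"
        using False adm admissible_subset by blast
      moreover have "invariant_under F (\<Inter>\<C>)"
        using CK unfolding \<K>_def by (blast intro: invariant_under_Inter)
      moreover have "\<Inter>\<C> \<subseteq> A"
        using False CK unfolding \<K>_def by blast
      ultimately have "\<Inter>\<C> \<in> \<K>"
        using admissible_Inter[OF adm] unfolding \<K>_def by simp
      then show ?thesis by blast
    qed
  qed
  then obtain K where K: "K \<in> \<K>" and max: "\<And>K'. K' \<in> \<K> \<Longrightarrow> K' \<subseteq> K \<Longrightarrow> K' = K"
    by blast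
  have "minimal_invariant_admissible M d F K"
    unfolding minimal_invariant_admissible_def
  proof (intro conjI allI impI)
    fix K' assume "admissible M d K' \<and> K' \<noteq> {} \<and> invariant_under F K' \<and> K' \<subseteq> K"
    with K show "K' = K" by (intro max) (auto simp: \<K>_def)
  qed (use K in \<open>auto simp: \<K>_def\<close>)
  then show ?thesis using K unfolding \<K>_def by blast
qed

context Metric_space
begin

lemma admissible_mcball: "c \<in> M \<Longrightarrow> 0 \<le> r \<Longrightarrow> admissible M d (mcball c r)"
  unfolding admissible_def closed_balls_def
  by (intro exI[of _ "{mcball c r}"]) (auto simp: mcball_def)

lemma admissible_Int_mcballs:
  assumes "admissible M d K" "C \<subseteq> M" "0 \<le> r"
  shows "admissible M d (K \<inter> (\<Inter>c\<in>C. mcball c r))"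
proof -
  have "admissible M d (M \<inter> \<Inter>(insert K ((\<lambda>c. mcball c r) ` C)))"
    using assms admissible_mcball by (intro admissible_Inter) auto
  moreover have "M \<inter> \<Inter>(insert K ((\<lambda>c. mcball c r) ` C)) = K \<inter> (\<Inter>c\<in>C. mcball c r)"
    using admissible_subset[OF assms(1)] by blast
  ultimately show ?thesis by metis
qed

text \<open>By interlacing, the set of points of K whose r-ball covers K is invariant; by
  minimality it is all of K.\<close>
lemma minimal_invariant_admissible_all_centres:
  assumes "minimal_invariant_admissible M d F K"
    and "interlaced_orbit_nonexpansive M d F" "F \<noteq> {}"
    and "0 \<le> r" "z \<in> K" "K \<subseteq> mcball z r"
  shows "K \<subseteq> (\<Inter>x\<in>K. mcball x r)"
proof -
  have adm: "admissible M d K" and inv: "invariant_under F K" and KM: "K \<subseteq> M"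
    and min: "\<And>K'. admissible M d K' \<Longrightarrow> K' \<noteq> {} \<Longrightarrow> invariant_under F K' \<Longrightarrow> K' \<subseteq> K \<Longrightarrow> K' = K"
    using assms(1) admissible_subset unfolding minimal_invariant_admissible_def by blast+
  define C where "C = K \<inter> (\<Inter>y\<in>K. mcball y r)"
  have "T x \<in> C" if T: "T \<in> F" and x: "x \<in> C" for T x
  proof -
    have "x \<in> K" and xr: "\<And>a. a \<in> K \<Longrightarrow> d x a \<le> r"
      using x commute unfolding C_def by auto
    then have TxK: "T x \<in> K" using inv T unfolding invariant_under_def by blast
    define K' where "K' = K \<inter> mcball (T x) r"
    have img: "S y \<in> K'" if "S \<in> F" "y \<in> K" for S y
      using interlaced_dist_le[OF assms(2,3) inv KM \<open>x \<in> K\<close> that(2) xr T that(1)]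
        inv that TxK KM unfolding K'_def invariant_under_def by auto
    have "admissible M d K'"
      unfolding K'_def using adm admissible_mcball TxK KM assms(4) by (blast intro: admissible_Int)
    moreover have "K' \<noteq> {}" using img assms(3,5) by blast
    moreover have "invariant_under F K'" using img unfolding K'_def invariant_under_def by blast
    ultimately have "K' = K" using min unfolding K'_def by blast
    then have "d y (T x) \<le> r" if "y \<in> K" for y
      using that commute[of y "T x"] unfolding K'_def by auto
    then show ?thesis using TxK KM unfolding C_def by auto
  qed
  then have "invariant_under F C" unfolding invariant_under_def by blast
  moreover have "admissible M d C"
    unfolding C_def using adm KM assms(4) by (rule admissible_Int_mcballs)
  moreover have "z \<in> C" using assms(5,6) KM commute unfolding C_def by auto
  ultimately have "C = K" using min unfolding C_def by blast
  then show ?thesis unfolding C_def by blast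
qed

lemma minimal_invariant_admissible_singleton:
  assumes "bounded_metric M d" "metric_normal_structure M d"
    and "interlaced_orbit_nonexpansive M d F" "F \<noteq> {}"
    and "minimal_invariant_admissible M d F K"
  shows "\<exists>p. K = {p}"
proof -
  have adm: "admissible M d K" and "K \<noteq> {}"
    using assms(5) unfolding minimal_invariant_admissible_def by blast+
  have KM: "K \<subseteq> M" using adm by (rule admissible_subset)
  have "x = y" if "x \<in> K" "y \<in> K" for x y
  proof (rule ccontr)
    assume "x \<noteq> y"
    with adm that have "admissible M d K \<and> (\<exists>x\<in>K. \<exists>y\<in>K. x \<noteq> y)" by blast
    then obtain z where z: "z \<in> K" and lt: "Dpt d z K < diam_d d K"
      using assms(2) unfolding metric_normal_structure_def by auto
    define r where "r = Dpt d z K"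
    have zM: "z \<in> M" using z KM by blast
    have "K \<subseteq> mcball z r"
      using dist_le_Dpt[OF assms(1) zM KM] zM KM unfolding r_def by (auto simp: subset_iff)
    moreover from this have "0 \<le> r" using z nonneg[of z z] by force
    ultimately have "K \<subseteq> (\<Inter>x\<in>K. mcball x r)"
      using minimal_invariant_admissible_all_centres[OF assms(5,3,4)] z by blast
    then have "diam_d d K \<le> r" using z by (intro diam_d_le) auto
    then show False using lt unfolding r_def by linarith
  qed
  then show ?thesis using \<open>K \<noteq> {}\<close> by blast
qed

lemma common_fixed_point_in_admissible:
  assumes "bounded_metric M d" "metric_normal_structure M d" "admissible_compact M d"
    and "interlaced_orbit_nonexpansive M d F"
    and "admissible M d A" "A \<noteq> {}" "invariant_under F A"
  shows "\<exists>x\<in>A. \<forall>T\<in>F. T x = x"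
proof (cases "F = {}")
  case True
  then show ?thesis using assms(6) by blast
next
  case False
  obtain K where "K \<subseteq> A" and K: "minimal_invariant_admissible M d F K"
    using exists_minimal_invariant_admissible[OF assms(3,5-7)] by blast
  moreover obtain p where p: "K = {p}"
    using minimal_invariant_admissible_singleton[OF assms(1,2,4) False K] by blast
  moreover have "invariant_under F {p}"
    using K unfolding p minimal_invariant_admissible_def by blast
  ultimately show ?thesis unfolding invariant_under_def by blast
qed

text \<open>The orbits of a common fixed point c are trivial, so interlacing gives d(Tx, c) \<le> d(x, c).\<close>
lemma invariant_under_mcball_common_fixed_point:
  assumes "interlaced_orbit_nonexpansive M d F" "c \<in> common_fixed_points M F"
  shows "invariant_under F (mcball c r)"
  unfolding invariant_under_def
proof (intro ballI)
  fix T x assume T: "T \<in> F" and x: "x \<in> mcball c r"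
  have c: "c \<in> M" "\<And>R. R \<in> F \<Longrightarrow> R c = c"
    using assms(2) unfolding common_fixed_points_def by auto
  have "Dpt d x (orbit R c) = d x c" if "R \<in> F" for R
    using c(2)[OF that] by (simp add: orbit_fixed_point Dpt_def)
  then have "{Dpt d x (orbit R c) | R. R \<in> F} = {d x c}"
    using T by (auto intro!: exI[of _ T])
  then have "d (T x) (T c) \<le> d x c"
    using assms(1) T x c(1) unfolding interlaced_orbit_nonexpansive_def by force
  moreover have "T x \<in> M"
    using assms(1) T x unfolding interlaced_orbit_nonexpansive_def self_maps_def by auto
  ultimately show "T x \<in> mcball c r"
    using x c(1) c(2)[OF T] commute[of c "T x"] commute[of c x] by auto
qed

lemma one_local_retract_common_fixed_points:
  assumes "bounded_metric M d" "metric_normal_structure M d" "admissible_compact M d"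
    and "interlaced_orbit_nonexpansive M d F"
  shows "one_local_retract M d (common_fixed_points M F)"
  unfolding one_local_retract_def
proof (intro conjI allI impI)
  show "common_fixed_points M F \<subseteq> M" unfolding common_fixed_points_def by blast
  fix P :: "('a \<times> real) set"
  assume P: "\<forall>(c, r)\<in>P. c \<in> common_fixed_points M F \<and> 0 \<le> r"
    and ne: "M \<inter> (\<Inter>(c, r)\<in>P. mcball c r) \<noteq> {}"
  let ?I = "M \<inter> (\<Inter>(c, r)\<in>P. mcball c r)"
  have "admissible M d ?I"
    using P admissible_mcball
    by (intro admissible_Inter) (auto simp: common_fixed_points_def)
  moreover have "invariant_under F (\<Inter>(insert M ((\<lambda>(c, r). mcball c r) ` P)))"
    using P invariant_under_carrier[OF assms(4)]
      invariant_under_mcball_common_fixed_point[OF assms(4)]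
    by (intro invariant_under_Inter) auto
  moreover have "\<Inter>(insert M ((\<lambda>(c, r). mcball c r) ` P)) = ?I" by blast
  ultimately obtain p where "p \<in> ?I" "\<forall>T\<in>F. T p = p"
    using common_fixed_point_in_admissible[OF assms _ ne] by metis
  then show "?I \<inter> common_fixed_points M F \<noteq> {}"
    unfolding common_fixed_points_def by blast
qed

end

theorem theorem3p3:
  fixes M :: "'a set" and d :: "'a \<Rightarrow> 'a \<Rightarrow> real" and F :: "('a \<Rightarrow> 'a) set"
  assumes "Metric_space M d"
    and "M \<noteq> {}"
    and "bounded_metric M d"
    and "metric_normal_structure M d"
    and "admissible_compact M d"
    and "interlaced_orbit_nonexpansive M d F"
  shows "(\<exists>x\<in>M. \<forall>T\<in>F. T x = x) \<and> one_local_retract M d (common_fixed_points M F)"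
proof
  interpret Metric_space M d by fact
  have "invariant_under F M"
    using assms(6) by (rule invariant_under_carrier)
  then show "\<exists>x\<in>M. \<forall>T\<in>F. T x = x"
    by (rule common_fixed_point_in_admissible[OF assms(3-6) admissible_carrier assms(2)])
  show "one_local_retract M d (common_fixed_points M F)"
    using one_local_retract_common_fixed_points[OF assms(3-6)] .
qed

end
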